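(* Let $H$ be a connected chordal graph on vertex set $\{v_1,\dots,v_n\}$ and let $v_1\prec\cdots\prec v_n$ be a perfect elimination ordering of $H$. For every $i\geq2$ such that $v_i$ has an outgoing neighbour, let $\nu(v_i)$ be the last (with respect to $\prec$) outgoing neighbour of $v_i$. Then the graph $T_\prec(H)$ on $V(H)$ whose edges are all pairs $\{v_i,\nu(v_i)\}$ is a spanning tree of $H$. Moreover, any ordering of $V(H)$ in which vertices farther from $v_1$ in $T_\prec(H)$ come later is a perfect elimination ordering of $H$.
   Context: A graph is chordal if it contains no induced cycle of length at least 4. An ordering $v_1\prec\cdots\prec v_n$ of the vertices of a graph $H$ is a perfect elimination ordering if for every $i$ the set of outgoing neighbours of $v_i$, i.e. neighbours of $v_i$ among $v_1,\dots,v_{i-1}$, induces a clique in $H$. *)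

theory Defs
  imports Main
begin

definition simple_graph :: "'a set \<Rightarrow> ('a \<Rightarrow> 'a \<Rightarrow> bool) \<Rightarrow> bool" where
  "simple_graph V E \<longleftrightarrow> finite V \<and> (\<forall>u v. E u v \<longrightarrow> u \<in> V \<and> v \<in> V)
     \<and> (\<forall>u v. E u v \<longrightarrow> E v u) \<and> (\<forall>u. \<not> E u u)"

definition connected_graph :: "'a set \<Rightarrow> ('a \<Rightarrow> 'a \<Rightarrow> bool) \<Rightarrow> bool" where
  "connected_graph V E \<longleftrightarrow> V \<noteq> {} \<and> (\<forall>u\<in>V. \<forall>v\<in>V. E\<^sup>*\<^sup>* u v)"

definition is_cycle :: "('a \<Rightarrow> 'a \<Rightarrow> bool) \<Rightarrow> 'a list \<Rightarrow> bool" where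
  "is_cycle E cs \<longleftrightarrow> length cs \<ge> 3 \<and> distinct cs
     \<and> (\<forall>i < length cs. E (cs ! i) (cs ! ((i + 1) mod length cs)))"

definition is_induced_cycle :: "('a \<Rightarrow> 'a \<Rightarrow> bool) \<Rightarrow> 'a list \<Rightarrow> bool" where
  "is_induced_cycle E cs \<longleftrightarrow> is_cycle E cs
     \<and> (\<forall>i < length cs. \<forall>j < length cs. E (cs ! i) (cs ! j) \<longrightarrow>
           j = (i + 1) mod length cs \<or> i = (j + 1) mod length cs)"

definition chordal :: "'a set \<Rightarrow> ('a \<Rightarrow> 'a \<Rightarrow> bool) \<Rightarrow> bool" where
  "chordal V E \<longleftrightarrow> (\<forall>cs. set cs \<subseteq> V \<and> length cs \<ge> 4 \<longrightarrow> \<not> is_induced_cycle E cs)"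

definition is_tree :: "'a set \<Rightarrow> ('a \<Rightarrow> 'a \<Rightarrow> bool) \<Rightarrow> bool" where
  "is_tree V T \<longleftrightarrow> connected_graph V T \<and> (\<forall>cs. \<not> is_cycle T cs)"

definition spanning_tree :: "'a set \<Rightarrow> ('a \<Rightarrow> 'a \<Rightarrow> bool) \<Rightarrow> ('a \<Rightarrow> 'a \<Rightarrow> bool) \<Rightarrow> bool" where
  "spanning_tree V E T \<longleftrightarrow> simple_graph V T \<and> (\<forall>u v. T u v \<longrightarrow> E u v) \<and> is_tree V T"

definition is_ordering :: "'a set \<Rightarrow> 'a list \<Rightarrow> bool" where
  "is_ordering V vs \<longleftrightarrow> distinct vs \<and> set vs = V"

definition peo :: "('a \<Rightarrow> 'a \<Rightarrow> bool) \<Rightarrow> 'a list \<Rightarrow> bool" where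
  "peo E vs \<longleftrightarrow> (\<forall>i < length vs. \<forall>j < i. \<forall>k < i.
      E (vs ! i) (vs ! j) \<and> E (vs ! i) (vs ! k) \<and> j \<noteq> k \<longrightarrow> E (vs ! j) (vs ! k))"

definition has_out_nbr :: "('a \<Rightarrow> 'a \<Rightarrow> bool) \<Rightarrow> 'a list \<Rightarrow> nat \<Rightarrow> bool" where
  "has_out_nbr E vs i \<longleftrightarrow> (\<exists>j < i. E (vs ! i) (vs ! j))"

definition nu :: "('a \<Rightarrow> 'a \<Rightarrow> bool) \<Rightarrow> 'a list \<Rightarrow> nat \<Rightarrow> 'a" where
  "nu E vs i = vs ! (GREATEST j. j < i \<and> E (vs ! i) (vs ! j))"

definition T_prec :: "('a \<Rightarrow> 'a \<Rightarrow> bool) \<Rightarrow> 'a list \<Rightarrow> 'a \<Rightarrow> 'a \<Rightarrow> bool" where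
  "T_prec E vs u v \<longleftrightarrow> (\<exists>i < length vs. has_out_nbr E vs i \<and>
      ((u = vs ! i \<and> v = nu E vs i) \<or> (v = vs ! i \<and> u = nu E vs i)))"

definition gdist :: "('a \<Rightarrow> 'a \<Rightarrow> bool) \<Rightarrow> 'a \<Rightarrow> 'a \<Rightarrow> nat" where
  "gdist E u v = (LEAST k. (E ^^ k) u v)"

end

theory Submission
  imports Defs
begin

text \<open>
Deleting a vertex whose neighbourhood is a clique does not disconnect a graph, so every prefix
of a perfect elimination ordering of a connected graph induces a connected subgraph. Hence every
vertex except the first has an earlier neighbour, and the last of them, its parent, lies strictly
before it: the parent edges form a spanning tree rooted at the first vertex, acyclic because the
latest vertex of a cycle would need two earlier tree neighbours. By the perfect elimination
property an earlier neighbour of a vertex is either its parent or adjacent to the parent, so by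
induction it has strictly smaller depth in the tree. Therefore an ordering by depth keeps every
earlier neighbour earlier, and the perfect elimination property is inherited.
\<close>

definition induced :: "('a \<Rightarrow> 'a \<Rightarrow> bool) \<Rightarrow> 'a set \<Rightarrow> 'a \<Rightarrow> 'a \<Rightarrow> bool" where
  "induced E A x y \<longleftrightarrow> E x y \<and> x \<in> A \<and> y \<in> A"

lemma induced_rtranclp_delete_simplicial:
  assumes simplicial: "\<And>a b. a \<in> A \<Longrightarrow> b \<in> A \<Longrightarrow> E a v \<Longrightarrow> E v b \<Longrightarrow> a = b \<or> E a b"
    and walk: "(induced E (insert v A))\<^sup>*\<^sup>* x y" and "x \<in> A" "y \<in> A"
  shows "(induced E A)\<^sup>*\<^sup>* x y"
proof -
  \<comment> \<open>A walk leaving A through v re-enters it at a neighbour of v, equal or adjacent to the previous one.\<close>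
  have "(y \<in> A \<and> (induced E A)\<^sup>*\<^sup>* x y) \<or> (y = v \<and> (\<exists>c\<in>A. (induced E A)\<^sup>*\<^sup>* x c \<and> E c v))"
    using walk
  proof (induction rule: rtranclp_induct)
    case base
    then show ?case using \<open>x \<in> A\<close> by simp
  next
    case (step y z)
    then have "E y z" "z \<in> insert v A" by (auto simp: induced_def)
    from step.IH show ?case
    proof
      assume y: "y \<in> A \<and> (induced E A)\<^sup>*\<^sup>* x y"
      show ?case
      proof (cases "z \<in> A")
        case True
        then have "induced E A y z" using y \<open>E y z\<close> by (simp add: induced_def)
        then show ?thesis using y True by (blast intro: rtranclp.rtrancl_into_rtrancl)
      qed (use y \<open>E y z\<close> \<open>z \<in> insert v A\<close> in blast)
    next
      assume "y = v \<and> (\<exists>c\<in>A. (induced E A)\<^sup>*\<^sup>* x c \<and> E c v)"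
      then obtain c where "y = v" "c \<in> A" "(induced E A)\<^sup>*\<^sup>* x c" "E c v" by blast
      show ?case
      proof (cases "z = v")
        case False
        then have "z \<in> A" using \<open>z \<in> insert v A\<close> by blast
        with simplicial[OF \<open>c \<in> A\<close> this \<open>E c v\<close>] \<open>E y z\<close> \<open>y = v\<close>
        have "c = z \<or> induced E A c z" by (auto simp: induced_def \<open>c \<in> A\<close>)
        then show ?thesis
          using \<open>(induced E A)\<^sup>*\<^sup>* x c\<close> \<open>z \<in> A\<close> by (auto intro: rtranclp.rtrancl_into_rtrancl)
      qed (use \<open>c \<in> A\<close> \<open>(induced E A)\<^sup>*\<^sup>* x c\<close> \<open>E c v\<close> in blast)
    qed
  qed
  then show ?thesis
  proof
    assume "y = v \<and> (\<exists>c\<in>A. (induced E A)\<^sup>*\<^sup>* x c \<and> E c v)"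
    then obtain c where "c \<in> A" "(induced E A)\<^sup>*\<^sup>* x c" "induced E A c y"
      using \<open>y \<in> A\<close> by (auto simp: induced_def)
    then show ?thesis by (blast intro: rtranclp.rtrancl_into_rtrancl)
  qed blast
qed

lemma cycle_two_neighbours:
  assumes "is_cycle T cs" "x \<in> set cs"
  obtains y z where "y \<in> set cs" "z \<in> set cs" "y \<noteq> z" "y \<noteq> x" "z \<noteq> x" "T x y" "T z x"
proof -
  define L where "L = length cs"
  have L: "3 \<le> L" and dcs: "distinct cs" and adj: "\<And>i. i < L \<Longrightarrow> T (cs ! i) (cs ! ((i + 1) mod L))"
    using assms(1) unfolding is_cycle_def L_def by auto
  obtain p where p: "p < L" "cs ! p = x" using assms(2) unfolding L_def by (metis in_set_conv_nth)
  define s where "s = (p + 1) mod L"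
  define r where "r = (p + L - 1) mod L"
  have s: "s < L" "s \<noteq> p" and r: "r < L" "(r + 1) mod L = p" "r \<noteq> p" and "s \<noteq> r"
    using p L unfolding s_def r_def by (auto simp: mod_Suc_eq mod_if)
  have "T x (cs ! s)" "T (cs ! r) x" using adj[OF p(1)] adj[OF r(1)] p(2) r(2) s_def by simp_all
  moreover have "cs ! s \<noteq> cs ! r" "cs ! s \<noteq> x" "cs ! r \<noteq> x"
    using \<open>s \<noteq> r\<close> s r p(1) p(2)[symmetric] dcs by (simp_all add: L_def nth_eq_iff_index_eq)
  moreover have "cs ! s \<in> set cs" "cs ! r \<in> set cs" using s(1) r(1) by (simp_all add: L_def)
  ultimately show ?thesis using that by blast
qed

lemma no_cycle_if_unique_lower_neighbour:
  fixes f :: "'a \<Rightarrow> nat"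
  assumes inj: "inj_on f (set cs)"
    and unique: "\<And>x y z. x \<in> set cs \<Longrightarrow> T x y \<Longrightarrow> T z x \<Longrightarrow> f y < f x \<Longrightarrow> f z < f x \<Longrightarrow> y = z"
  shows "\<not> is_cycle T cs"
proof
  assume cycle: "is_cycle T cs"
  then have "set cs \<noteq> {}" unfolding is_cycle_def by auto
  then have "Max (f ` set cs) \<in> f ` set cs" by simp
  then obtain x where x: "x \<in> set cs" "f x = Max (f ` set cs)" by auto
  then have max: "f w \<le> f x" if "w \<in> set cs" for w using that by simp
  obtain y z where "y \<in> set cs" "z \<in> set cs" "y \<noteq> z" "y \<noteq> x" "z \<noteq> x" "T x y" "T z x"
    using cycle_two_neighbours[OF cycle x(1)] by blast
  moreover have "f w < f x" if "w \<in> set cs" "w \<noteq> x" for w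
    using max[OF that(1)] inj_on_eq_iff[OF inj that(1) x(1)] that(2) by linarith
  ultimately show False using unique[OF x(1)] by blast
qed

lemma relpowp_bounded_increment:
  assumes step: "\<And>x y. T x y \<Longrightarrow> d y \<le> Suc (d x)" and "(T ^^ k) r y"
  shows "d y \<le> d r + k"
  using assms(2)
proof (induction k arbitrary: y)
  case (Suc k)
  then obtain x where "(T ^^ k) r x" "T x y" by (blast elim: relpowp_Suc_E)
  then show ?case using Suc.IH step by fastforce
qed simp

locale connected_peo_graph =
  fixes V :: "'a set" and E :: "'a \<Rightarrow> 'a \<Rightarrow> bool" and vs :: "'a list"
  assumes simple: "simple_graph V E" and connected: "connected_graph V E"
    and ordering: "is_ordering V vs" and peo: "peo E vs"
begin

lemma E_sym: "E x y \<Longrightarrow> E y x"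
  and E_irrefl: "\<not> E x x"
  and E_in_V: "E x y \<Longrightarrow> x \<in> V \<and> y \<in> V"
  using simple unfolding simple_graph_def by blast+

lemma distinct_vs: "distinct vs" and set_vs: "set vs = V"
  using ordering unfolding is_ordering_def by blast+

lemma nth_eq_iff: "i < length vs \<Longrightarrow> j < length vs \<Longrightarrow> vs ! i = vs ! j \<longleftrightarrow> i = j"
  by (simp add: distinct_vs nth_eq_iff_index_eq)

lemma peoD: "i < length vs \<Longrightarrow> j < i \<Longrightarrow> k < i \<Longrightarrow> E (vs ! i) (vs ! j) \<Longrightarrow> E (vs ! i) (vs ! k)
    \<Longrightarrow> j \<noteq> k \<Longrightarrow> E (vs ! j) (vs ! k)"
  using peo unfolding peo_def by blast

lemma vs_nonempty: "0 < length vs"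
  using connected set_vs unfolding connected_graph_def by auto

lemma in_set_take_iff: "x \<in> set (take m vs) \<longleftrightarrow> (\<exists>j < min m (length vs). vs ! j = x)"
  by (auto simp: in_set_conv_nth)

lemma prefix_connected:
  assumes "0 < m" "m \<le> length vs" "x \<in> set (take m vs)" "y \<in> set (take m vs)"
  shows "(induced E (set (take m vs)))\<^sup>*\<^sup>* x y"
  using assms
proof (induction "length vs - m" arbitrary: m)
  case 0
  then have "induced E (set (take m vs)) = E"
    using E_in_V set_vs by (auto simp: induced_def fun_eq_iff)
  then show ?case
    using connected 0 set_vs unfolding connected_graph_def by (metis in_set_takeD)
next
  case (Suc d)
  then have m: "m < length vs" by linarith
  have prefix_Suc: "set (take (Suc m) vs) = insert (vs ! m) (set (take m vs))"
    using m by (simp add: take_Suc_conv_app_nth)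
  have walk: "(induced E (insert (vs ! m) (set (take m vs))))\<^sup>*\<^sup>* x y"
    using Suc.hyps(1)[of "Suc m"] Suc.hyps(2) Suc.prems m prefix_Suc by auto
  have simplicial: "a = b \<or> E a b"
    if "a \<in> set (take m vs)" "b \<in> set (take m vs)" "E a (vs ! m)" "E (vs ! m) b" for a b
    using that peoD[OF m] E_sym m by (auto simp: in_set_take_iff)
  show ?case by (rule induced_rtranclp_delete_simplicial[OF simplicial walk Suc.prems(3,4)])
qed

lemma has_out_nbr_nonfirst:
  assumes "0 < i" "i < length vs"
  shows "has_out_nbr E vs i"
proof -
  let ?A = "set (take (Suc i) vs)"
  have "(induced E ?A)\<^sup>*\<^sup>* (vs ! i) (vs ! 0)"
    using prefix_connected[of "Suc i"] assms by (auto simp: in_set_take_iff)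
  moreover have "vs ! i \<noteq> vs ! 0" using assms nth_eq_iff[of i 0] by fastforce
  ultimately obtain z where "induced E ?A (vs ! i) z"
    by (blast elim: converse_rtranclpE)
  then obtain j where "j < Suc i" "vs ! j = z" "E (vs ! i) z"
    using assms by (auto simp: induced_def in_set_take_iff)
  moreover have "j \<noteq> i" using calculation E_irrefl by blast
  ultimately show ?thesis unfolding has_out_nbr_def by (auto simp: less_Suc_eq)
qed

definition parent :: "nat \<Rightarrow> nat" where
  "parent i = (GREATEST j. j < i \<and> E (vs ! i) (vs ! j))"

lemma nu_eq_parent: "nu E vs i = vs ! parent i"
  unfolding nu_def parent_def ..

lemma
  assumes "0 < i" "i < length vs"
  shows parent_less: "parent i < i"
    and parent_adj: "E (vs ! i) (vs ! parent i)"
    and le_parent: "j < i \<Longrightarrow> E (vs ! i) (vs ! j) \<Longrightarrow> j \<le> parent i"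
proof -
  let ?P = "\<lambda>j. j < i \<and> E (vs ! i) (vs ! j)"
  obtain k where "?P k" using has_out_nbr_nonfirst[OF assms] unfolding has_out_nbr_def by blast
  then have "?P (Greatest ?P)" by (intro GreatestI_nat[of ?P k i]) auto
  then show "parent i < i" "E (vs ! i) (vs ! parent i)" unfolding parent_def by auto
  show "j \<le> parent i" if "j < i" "E (vs ! i) (vs ! j)"
    using that unfolding parent_def by (intro Greatest_le_nat[of ?P j i]) auto
qed

lemma T_prec_iff: "T_prec E vs u v \<longleftrightarrow> (\<exists>i. 0 < i \<and> i < length vs \<and>
    (u = vs ! i \<and> v = vs ! parent i \<or> v = vs ! i \<and> u = vs ! parent i))"
  unfolding T_prec_def nu_eq_parent
  by (metis has_out_nbr_nonfirst has_out_nbr_def bot_nat_0.not_eq_extremum not_less_zero)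

lemma T_prec_sym: "T_prec E vs u v \<Longrightarrow> T_prec E vs v u"
  unfolding T_prec_iff by blast

lemma T_prec_imp_E: "T_prec E vs u v \<Longrightarrow> E u v"
  unfolding T_prec_iff using parent_adj E_sym by blast

lemma T_prec_in_V: "T_prec E vs u v \<Longrightarrow> u \<in> V \<and> v \<in> V"
  using T_prec_imp_E E_in_V by blast

lemma T_prec_lower_is_parent:
  assumes "a < length vs" "b < a" "T_prec E vs (vs ! a) (vs ! b)"
  shows "b = parent a"
proof -
  obtain i where i: "0 < i" "i < length vs"
    "vs ! a = vs ! i \<and> vs ! b = vs ! parent i \<or> vs ! b = vs ! i \<and> vs ! a = vs ! parent i"
    using assms(3) unfolding T_prec_iff by blast
  moreover have "parent i < i" using parent_less[OF i(1,2)] .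
  ultimately show ?thesis using assms nth_eq_iff by (metis order.strict_trans not_less_iff_gr_or_eq)
qed

definition pos :: "'a \<Rightarrow> nat" where
  "pos x = (THE i. i < length vs \<and> vs ! i = x)"

lemma pos_nth: "i < length vs \<Longrightarrow> pos (vs ! i) = i"
  unfolding pos_def using nth_eq_iff by (intro the_equality) auto

lemma nth_pos: "x \<in> V \<Longrightarrow> pos x < length vs \<and> vs ! pos x = x"
  using set_vs pos_nth by (metis in_set_conv_nth)

lemma T_prec_acyclic: "\<not> is_cycle (T_prec E vs) cs"
proof
  assume cycle: "is_cycle (T_prec E vs) cs"
  then have "set cs \<subseteq> V"
    unfolding is_cycle_def using T_prec_in_V by (metis in_set_conv_nth subsetI)
  then have "inj_on pos (set cs)" using nth_pos by (metis inj_onI subsetD)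
  moreover have "y = z" if "x \<in> set cs" "T_prec E vs x y" "T_prec E vs z x"
    "pos y < pos x" "pos z < pos x" for x y z
  proof -
    have "pos y = parent (pos x)" "pos z = parent (pos x)"
      using that T_prec_lower_is_parent[of "pos x"] T_prec_sym nth_pos T_prec_in_V by metis+
    then show ?thesis using that nth_pos T_prec_in_V by metis
  qed
  ultimately have "\<not> is_cycle (T_prec E vs) cs" by (rule no_cycle_if_unique_lower_neighbour)
  then show False using cycle by contradiction
qed

text \<open>The guard \<^prop>\<open>parent i < i\<close> only ensures termination; it holds for all valid indices.\<close>
function depth :: "nat \<Rightarrow> nat" where
  "depth i = (if 0 < i \<and> parent i < i then Suc (depth (parent i)) else 0)"
  by auto
termination by (relation "measure id") auto

declare depth.simps [simp del]

lemma depth_0 [simp]: "depth 0 = 0"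
  by (simp add: depth.simps)

lemma depth_parent: "0 < i \<Longrightarrow> i < length vs \<Longrightarrow> depth i = Suc (depth (parent i))"
  using parent_less by (simp add: depth.simps)

lemma depth_less_if_adjacent:
  "a < length vs \<Longrightarrow> b < a \<Longrightarrow> E (vs ! a) (vs ! b) \<Longrightarrow> depth b < depth a"
proof (induction a arbitrary: b rule: less_induct)
  case (less a)
  then have "0 < a" by simp
  note parent = parent_less[OF this less.prems(1)] parent_adj[OF this less.prems(1)]
  have "b \<le> parent a" using le_parent \<open>0 < a\<close> less.prems by blast
  then consider "b = parent a" | "b < parent a" by linarith
  then have "depth b \<le> depth (parent a)"
  proof cases
    case 2
    have "E (vs ! parent a) (vs ! b)"
      using peoD[OF less.prems(1) parent(1) less.prems(2) parent(2) less.prems(3)] 2 by simp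
    then show ?thesis using less.IH[OF parent(1)] less.prems(1) parent(1) 2 by fastforce
  qed simp
  then show ?case using depth_parent \<open>0 < a\<close> less.prems(1) by simp
qed

lemma relpowp_depth: "i < length vs \<Longrightarrow> (T_prec E vs ^^ depth i) (vs ! 0) (vs ! i)"
proof (induction i rule: less_induct)
  case (less i)
  show ?case
  proof (cases "i = 0")
    case False
    then have "(T_prec E vs ^^ depth (parent i)) (vs ! 0) (vs ! parent i)"
      using less.IH parent_less less.prems by force
    moreover have "T_prec E vs (vs ! parent i) (vs ! i)"
      unfolding T_prec_iff using less.prems False by blast
    ultimately have "(T_prec E vs ^^ Suc (depth (parent i))) (vs ! 0) (vs ! i)"
      by (rule relpowp_Suc_I)
    then show ?thesis using depth_parent False less.prems by simp
  qed simp
qed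

lemma depth_pos_step:
  assumes "T_prec E vs x y"
  shows "depth (pos y) \<le> Suc (depth (pos x))"
proof -
  obtain i where i: "0 < i" "i < length vs"
    and xy: "x = vs ! i \<and> y = vs ! parent i \<or> y = vs ! i \<and> x = vs ! parent i"
    using assms unfolding T_prec_iff by blast
  have "pos (vs ! i) = i" "pos (vs ! parent i) = parent i"
    using pos_nth i parent_less[OF i] by auto
  with xy depth_parent[OF i] show ?thesis by auto
qed

lemma gdist_eq_depth: "x \<in> V \<Longrightarrow> gdist (T_prec E vs) (vs ! 0) x = depth (pos x)"
  unfolding gdist_def
proof (rule Least_equality)
  assume "x \<in> V"
  then show "(T_prec E vs ^^ depth (pos x)) (vs ! 0) x" using relpowp_depth nth_pos by metis
  fix k assume "(T_prec E vs ^^ k) (vs ! 0) x"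
  then show "depth (pos x) \<le> k"
    using relpowp_bounded_increment[where d = "\<lambda>x. depth (pos x)", OF depth_pos_step]
      pos_nth[OF vs_nonempty] by fastforce
qed

lemma spanning_tree: "spanning_tree V E (T_prec E vs)"
proof -
  have "finite V" using simple unfolding simple_graph_def by blast
  then have simple_T: "simple_graph V (T_prec E vs)"
    unfolding simple_graph_def using T_prec_in_V T_prec_sym T_prec_imp_E E_irrefl by metis
  have root: "(T_prec E vs)\<^sup>*\<^sup>* (vs ! 0) x" if "x \<in> V" for x
    using relpowp_imp_rtranclp[OF relpowp_depth] nth_pos[OF that] by metis
  have "symp (T_prec E vs)\<^sup>*\<^sup>*" by (rule symp_rtranclp) (blast intro: sympI T_prec_sym)
  then have "(T_prec E vs)\<^sup>*\<^sup>* x y" if "x \<in> V" "y \<in> V" for x y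
    using root[OF that(1)] root[OF that(2)] by (blast dest: sympD intro: rtranclp_trans)
  then have "connected_graph V (T_prec E vs)"
    using connected unfolding connected_graph_def by blast
  with simple_T show ?thesis
    unfolding spanning_tree_def is_tree_def using T_prec_imp_E T_prec_acyclic by blast
qed

lemma peo_if_earlier_neighbours_earlier:
  assumes ws: "is_ordering V ws"
    and earlier: "\<And>i j. i < length ws \<Longrightarrow> j < i \<Longrightarrow> E (ws ! i) (ws ! j) \<Longrightarrow> pos (ws ! j) < pos (ws ! i)"
  shows "peo E ws"
  unfolding peo_def
proof (intro allI impI)
  fix i j k
  assume ijk: "i < length ws" "j < i" "k < i"
    and edges: "E (ws ! i) (ws ! j) \<and> E (ws ! i) (ws ! k) \<and> j \<noteq> k"
  have "ws ! l \<in> V" if "l < length ws" for l using that ws unfolding is_ordering_def by auto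
  then have pos: "pos (ws ! l) < length vs \<and> vs ! pos (ws ! l) = ws ! l" if "l < length ws" for l
    using that nth_pos by blast
  have "ws ! j \<noteq> ws ! k" using ws ijk edges unfolding is_ordering_def by (simp add: nth_eq_iff_index_eq)
  then show "E (ws ! j) (ws ! k)"
    using peoD[of "pos (ws ! i)" "pos (ws ! j)" "pos (ws ! k)"] earlier[OF ijk(1,2)] earlier[OF ijk(1,3)]
      pos[of i] pos[of j] pos[of k] ijk edges by fastforce
qed

lemma peo_if_gdist_monotone:
  assumes ws: "is_ordering V ws"
    and mono: "\<forall>i < length ws. \<forall>j < length ws.
      gdist (T_prec E vs) (vs ! 0) (ws ! i) < gdist (T_prec E vs) (vs ! 0) (ws ! j) \<longrightarrow> i < j"
  shows "peo E ws"
proof (rule peo_if_earlier_neighbours_earlier[OF ws])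
  fix i j assume ij: "i < length ws" "j < i" and edge: "E (ws ! i) (ws ! j)"
  have V: "ws ! i \<in> V" "ws ! j \<in> V" using ij ws unfolding is_ordering_def by auto
  define a b where "a = pos (ws ! i)" and "b = pos (ws ! j)"
  have ab: "a < length vs" "b < length vs" "vs ! a = ws ! i" "vs ! b = ws ! j"
    using nth_pos[OF V(1)] nth_pos[OF V(2)] unfolding a_def b_def by auto
  have "\<not> gdist (T_prec E vs) (vs ! 0) (ws ! i) < gdist (T_prec E vs) (vs ! 0) (ws ! j)"
    using mono[rule_format, of i j] ij by auto
  then have "\<not> depth a < depth b" using gdist_eq_depth V unfolding a_def b_def by simp
  then have "\<not> a < b" using depth_less_if_adjacent[of b a] E_sym[OF edge] ab by auto
  moreover have "a \<noteq> b" using edge E_irrefl ab by metis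
  ultimately show "pos (ws ! j) < pos (ws ! i)" unfolding a_def[symmetric] b_def[symmetric] by linarith
qed

end

theorem mainTheorem6:
  fixes V :: "'a set" and E :: "'a \<Rightarrow> 'a \<Rightarrow> bool" and vs :: "'a list"
  assumes "simple_graph V E"
    and "connected_graph V E"
    and "chordal V E"
    and "is_ordering V vs"
    and "peo E vs"
  shows "spanning_tree V E (T_prec E vs)
    \<and> (\<forall>ws. is_ordering V ws \<and>
          (\<forall>i < length ws. \<forall>j < length ws.
              gdist (T_prec E vs) (vs ! 0) (ws ! i) < gdist (T_prec E vs) (vs ! 0) (ws ! j) \<longrightarrow> i < j)
          \<longrightarrow> peo E ws)"
proof -
  interpret connected_peo_graph V E vs
    using assms by unfold_locales
  show ?thesis using spanning_tree peo_if_gdist_monotone by blast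
qed

end
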